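(* Let $\mathbf{P_0},\mathbf{P_1}$ be $n\times n$ transition probability matrices of irreducible and aperiodic Markov chains on $n$ states, let $\mathbf{P_s}=(1-s)\mathbf{P_0}+s\mathbf{P_1}$ for $s\in[0,1]$, and let $\pi_s$ be the stationary distribution of $\mathbf{P_s}$. Then $s\mapsto\pi_s$ is continuous at $s=0$ with respect to the total variation norm. In particular, for $0<\epsilon<1/\sqrt{n}$, if $$\delta=\frac{\epsilon(1-\sqrt{n}\,\epsilon)}{4n^{3/2}\,t_{mix}(\epsilon/2)},$$ then $\|\pi_s-\pi_0\|_{TV}\le\epsilon/2$ for all $s\in[0,1]$ with $s\le\delta$.
   Context: Distributions are row vectors; $\|\mu-\nu\|_{TV}=\frac12\|\mu-\nu\|_1$. For an irreducible aperiodic transition matrix $\mathbf{P}$ with stationary distribution $\pi$, $t_{mix}(\mathbf{P},\epsilon)=\inf\{T\in\mathbb{N}: \|\nu\mathbf{P}^T-\pi\|_{TV}\le\epsilon \text{ for all distributions }\nu\}$, and $t_{mix}(\epsilon)=\sup_{s\in[0,1]}t_{mix}(\mathbf{P_s},\epsilon)$. *)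

theory Defs
  imports "HOL-Analysis.Analysis"
begin

text \<open>Finite-state Markov chains on the finite state type 'n (n = CARD('n) states).
  Transition matrices are real^'n^'n, distributions are row vectors real^'n,
  acting on the left via v*.\<close>

primrec matpow :: "real^'n^'n \<Rightarrow> nat \<Rightarrow> real^'n^'n" where
  "matpow P 0 = mat 1"
| "matpow P (Suc k) = matpow P k ** P"

definition stochastic :: "real^'n^'n \<Rightarrow> bool" where
  "stochastic P \<longleftrightarrow> (\<forall>i j. P$i$j \<ge> 0) \<and> (\<forall>i. (\<Sum>j\<in>UNIV. P$i$j) = 1)"

definition irreducible :: "real^'n^'n \<Rightarrow> bool" where
  "irreducible P \<longleftrightarrow> (\<forall>i j. \<exists>k. matpow P k $i$j > 0)"

definition period :: "real^'n^'n \<Rightarrow> 'n \<Rightarrow> nat" where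
  "period P i = Gcd {t. t \<ge> 1 \<and> matpow P t $i$i > 0}"

definition aperiodic :: "real^'n^'n \<Rightarrow> bool" where
  "aperiodic P \<longleftrightarrow> (\<forall>i. period P i = 1)"

definition distribution :: "real^'n \<Rightarrow> bool" where
  "distribution v \<longleftrightarrow> (\<forall>i. v$i \<ge> 0) \<and> (\<Sum>i\<in>UNIV. v$i) = 1"

definition stationary :: "real^'n^'n \<Rightarrow> real^'n \<Rightarrow> bool" where
  "stationary P \<pi> \<longleftrightarrow> distribution \<pi> \<and> \<pi> v* P = \<pi>"

text \<open>The (unique, for irreducible P) stationary distribution.\<close>
definition stat_dist :: "real^'n^'n \<Rightarrow> real^'n" where
  "stat_dist P = (THE \<pi>. stationary P \<pi>)"

definition tv_dist :: "real^'n \<Rightarrow> real^'n \<Rightarrow> real" where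
  "tv_dist \<mu> \<nu> = (\<Sum>i\<in>UNIV. \<bar>\<mu>$i - \<nu>$i\<bar>) / 2"

definition tmix :: "real^'n^'n \<Rightarrow> real \<Rightarrow> nat" where
  "tmix P \<epsilon> = Inf {T. \<forall>\<nu>. distribution \<nu> \<longrightarrow> tv_dist (\<nu> v* matpow P T) (stat_dist P) \<le> \<epsilon>}"

definition interp :: "real^'n^'n \<Rightarrow> real^'n^'n \<Rightarrow> real \<Rightarrow> real^'n^'n" where
  "interp P0 P1 s = (1 - s) *\<^sub>R P0 + s *\<^sub>R P1"

definition tmix_path :: "real^'n^'n \<Rightarrow> real^'n^'n \<Rightarrow> real \<Rightarrow> nat" where
  "tmix_path P0 P1 \<epsilon> = Sup ((\<lambda>s. tmix (interp P0 P1 s) \<epsilon>) ` {0..1})"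

end

theory Submission
  imports Defs
begin

text \<open>For s \<in> [0,1] the stationary distribution \<pi>_s of P_s satisfies
  \<pi>_s P_0 = \<pi>_s - s d with d = \<pi>_s (P_1 - P_0) of l1 norm at most 2, hence for every T
  \<pi>_s - \<pi>_0 = (\<pi>_s - \<pi>_0) P_0^T + s \<Sum>_{j<T} d P_0^j.
  If T is the mixing time of P_0 to accuracy \<eta>/2, then P_0^T contracts differences of
  distributions by the factor \<eta>, which gives tv(\<pi>_s, \<pi>_0) \<le> s T / (1 - \<eta>).
  Mixing times are finite, uniformly along the path, because an irreducible aperiodic chain is
  primitive: some power P^K has all entries \<ge> c > 0, and Doeblin's argument shows that P^K
  contracts vectors of total mass zero by the factor 1 - n c in l1 norm.\<close>

definition l1_norm :: "real^'n \<Rightarrow> real" where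
  "l1_norm v = (\<Sum>i\<in>UNIV. \<bar>v$i\<bar>)"

lemma tv_dist_eq_l1_norm: "tv_dist \<mu> \<nu> = l1_norm (\<mu> - \<nu>) / 2"
  by (simp add: tv_dist_def l1_norm_def)

lemma l1_norm_nonneg: "0 \<le> l1_norm v"
  by (simp add: l1_norm_def sum_nonneg)

lemma l1_norm_triangle: "l1_norm (u + v) \<le> l1_norm u + l1_norm v"
  unfolding l1_norm_def sum.distrib[symmetric] by (rule sum_mono) (simp add: abs_triangle_ineq)

lemma l1_norm_diff_le: "l1_norm (u - v) \<le> l1_norm u + l1_norm v"
  unfolding l1_norm_def sum.distrib[symmetric] by (rule sum_mono) (simp add: abs_triangle_ineq4)

lemma l1_norm_scaleR: "l1_norm (r *\<^sub>R v) = \<bar>r\<bar> * l1_norm v"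
  by (simp add: l1_norm_def abs_mult sum_distrib_left)

lemma l1_norm_sum_le: "l1_norm (\<Sum>k\<in>A. f k) \<le> (\<Sum>k\<in>A. l1_norm (f k))"
proof (induct A rule: infinite_finite_induct)
  case (insert x F)
  then show ?case using l1_norm_triangle[of "f x" "sum f F"] by simp
qed (auto simp: l1_norm_def)

lemma l1_norm_distribution: "distribution v \<Longrightarrow> l1_norm v = 1"
  by (simp add: l1_norm_def distribution_def)

lemma l1_norm_diff_distributions_le:
  "distribution \<mu> \<Longrightarrow> distribution \<nu> \<Longrightarrow> l1_norm (\<mu> - \<nu>) \<le> 2"
  using l1_norm_diff_le[of \<mu> \<nu>] by (simp add: l1_norm_distribution)

lemma sum_diff_distributions:
  "distribution \<mu> \<Longrightarrow> distribution \<nu> \<Longrightarrow> (\<Sum>i\<in>UNIV. (\<mu> - \<nu>)$i) = 0"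
  by (simp add: distribution_def sum_subtractf)

lemma vector_matrix_mult_nth: "(v v* A) $ j = (\<Sum>i\<in>UNIV. v$i * A$i$j)"
  by (simp add: vector_matrix_mult_def)

lemma matrix_matrix_mult_nth: "(A ** B) $ i $ j = (\<Sum>k\<in>UNIV. A$i$k * B$k$j)"
  by (simp add: matrix_matrix_mult_def)

lemma vector_matrix_mult_sum_left: "(\<Sum>k\<in>A. f k) v* M = (\<Sum>k\<in>A. f k v* (M::real^'n^'m))"
  by (induct A rule: infinite_finite_induct)
     (auto simp: vector_matrix_left_distrib vec_eq_iff vector_matrix_mult_nth)

lemma vector_matrix_mult_scaleR_left: "(r *\<^sub>R v) v* M = r *\<^sub>R (v v* (M::real^'n^'m))"
  using scalar_vector_matrix_assoc[of r v M] by (simp add: scalar_mult_eq_scaleR)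

lemma matpow_add: "matpow P (a + b) = matpow P a ** matpow P b"
  by (induct b) (simp_all add: matrix_mul_assoc)

lemma matpow_mult: "matpow P (m * k) = matpow (matpow P k) m"
  by (induct m) (simp_all add: matpow_add add.commute[of k])

lemma vector_matrix_mult_matpow_fixed: "w v* P = w \<Longrightarrow> w v* matpow P k = w"
  by (induct k) (simp_all add: vector_matrix_mul_assoc[symmetric])

lemma matpow_nonneg: "(\<And>i j. 0 \<le> M$i$j) \<Longrightarrow> 0 \<le> matpow M k $i$j"
  by (induct k arbitrary: i j) (auto simp: mat_def matrix_matrix_mult_nth sum_nonneg)

lemma stochastic_nonneg: "stochastic P \<Longrightarrow> 0 \<le> P$i$j"
  by (simp add: stochastic_def)

lemma stochastic_row_sum: "stochastic P \<Longrightarrow> (\<Sum>j\<in>UNIV. P$i$j) = 1"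
  by (simp add: stochastic_def)

lemma stochastic_mat_1: "stochastic (mat 1)"
  by (simp add: stochastic_def mat_def)

lemma stochastic_mult:
  assumes "stochastic A" "stochastic B"
  shows "stochastic (A ** B)"
  unfolding stochastic_def
proof (intro conjI allI)
  fix i j
  show "0 \<le> (A ** B)$i$j"
    using assms by (simp add: matrix_matrix_mult_nth sum_nonneg stochastic_nonneg)
  have "(\<Sum>j\<in>UNIV. (A ** B)$i$j) = (\<Sum>k\<in>UNIV. A$i$k * (\<Sum>j\<in>UNIV. B$k$j))"
    by (simp add: matrix_matrix_mult_nth sum_distrib_left) (rule sum.swap)
  then show "(\<Sum>j\<in>UNIV. (A ** B)$i$j) = 1"
    using assms by (simp add: stochastic_row_sum)
qed

lemma stochastic_matpow: "stochastic P \<Longrightarrow> stochastic (matpow P k)"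
  by (induct k) (simp_all add: stochastic_mat_1 stochastic_mult)

lemma sum_vector_matrix_mult_stochastic:
  assumes "stochastic P"
  shows "(\<Sum>j\<in>UNIV. (v v* P)$j) = (\<Sum>i\<in>UNIV. v$i)"
proof -
  have "(\<Sum>j\<in>UNIV. (v v* P)$j) = (\<Sum>i\<in>UNIV. v$i * (\<Sum>j\<in>UNIV. P$i$j))"
    by (simp add: vector_matrix_mult_nth sum_distrib_left) (rule sum.swap)
  with assms show ?thesis by (simp add: stochastic_row_sum)
qed

lemma distribution_vector_matrix_mult:
  assumes "distribution v" "stochastic P"
  shows "distribution (v v* P)"
  using assms sum_vector_matrix_mult_stochastic[OF assms(2), of v]
  by (simp add: distribution_def vector_matrix_mult_nth sum_nonneg stochastic_nonneg)

lemma l1_norm_vector_matrix_mult_le: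
  assumes "stochastic Q"
  shows "l1_norm (u v* Q) \<le> l1_norm u"
proof -
  have "l1_norm (u v* Q) \<le> (\<Sum>j\<in>UNIV. \<Sum>i\<in>UNIV. \<bar>u$i\<bar> * Q$i$j)"
    unfolding l1_norm_def vector_matrix_mult_nth
    by (rule sum_mono, rule order_trans[OF sum_abs]) (simp add: abs_mult assms stochastic_nonneg)
  also have "\<dots> = (\<Sum>i\<in>UNIV. \<bar>u$i\<bar> * (\<Sum>j\<in>UNIV. Q$i$j))"
    by (simp add: sum_distrib_left) (rule sum.swap)
  also have "\<dots> = l1_norm u"
    using assms by (simp add: stochastic_row_sum l1_norm_def)
  finally show ?thesis .
qed

text \<open>Doeblin's contraction: on vectors of total mass zero, the constant c can be subtracted
  from every entry of Q without changing u v* Q.\<close>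
lemma l1_norm_vector_matrix_mult_doeblin:
  assumes "stochastic Q" "\<And>i j. c \<le> Q$i$j" "(\<Sum>i\<in>UNIV. u$i) = 0"
  shows "l1_norm (u v* Q) \<le> (1 - real CARD('n) * c) * l1_norm (u::real^'n)"
proof -
  have shifted: "(u v* Q)$j = (\<Sum>i\<in>UNIV. u$i * (Q$i$j - c))" for j
    using assms(3)
    by (simp add: vector_matrix_mult_nth right_diff_distrib sum_subtractf sum_distrib_right[symmetric])
  have "l1_norm (u v* Q) \<le> (\<Sum>j\<in>UNIV. \<Sum>i\<in>UNIV. \<bar>u$i\<bar> * (Q$i$j - c))"
    unfolding l1_norm_def shifted
    by (rule sum_mono, rule order_trans[OF sum_abs]) (simp add: abs_mult assms(2))
  also have "\<dots> = (\<Sum>i\<in>UNIV. \<bar>u$i\<bar> * (\<Sum>j\<in>UNIV. Q$i$j - c))"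
    by (simp add: sum_distrib_left) (rule sum.swap)
  also have "\<dots> = (1 - real CARD('n) * c) * l1_norm u"
    using assms(1)
    by (simp add: sum_subtractf stochastic_row_sum l1_norm_def sum_distrib_left mult.commute)
  finally show ?thesis .
qed

lemma stochastic_entry_lower_bound:
  assumes "stochastic (Q::real^'n^'n)" "\<And>i j. c \<le> Q$i$j"
  shows "real CARD('n) * c \<le> 1"
proof -
  fix i :: 'n
  have "real CARD('n) * c = (\<Sum>j\<in>(UNIV::'n set). c)" by simp
  also have "\<dots> \<le> (\<Sum>j\<in>UNIV. Q$i$j)" by (rule sum_mono) (simp add: assms(2))
  also have "\<dots> = 1" using assms(1) by (simp add: stochastic_row_sum)
  finally show ?thesis .
qed

subsection \<open>Stationary distributions\<close>

lemma stochastic_subinvariant_eq: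
  assumes "stochastic P" "\<And>j. w$j \<le> (w v* P)$j"
  shows "w v* P = w"
proof -
  have "(\<Sum>j\<in>UNIV. (w v* P)$j - w$j) = 0"
    using sum_vector_matrix_mult_stochastic[OF assms(1)] by (simp add: sum_subtractf)
  then have "\<forall>j\<in>UNIV. (w v* P)$j - w$j = 0"
    by (subst sum_nonneg_eq_0_iff[symmetric]) (auto simp: assms(2))
  then show ?thesis by (simp add: vec_eq_iff)
qed

lemma stochastic_left_fixed_vector:
  assumes "stochastic (P::real^'n^'n)"
  obtains x where "x \<noteq> 0" "x v* P = x"
proof -
  define ones :: "real^'n" where "ones = (\<chi> i. 1)"
  have "P *v ones = ones"
    using assms by (simp add: ones_def matrix_vector_mult_def stochastic_row_sum vec_eq_iff)
  then have "(P - mat 1) *v ones = 0" by (simp add: matrix_vector_mult_diff_rdistrib)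
  moreover have "ones \<noteq> 0" by (simp add: ones_def vec_eq_iff)
  ultimately have "\<not> (\<exists>B. B ** (P - mat 1) = mat 1)"
    using matrix_left_invertible_ker by blast
  then have "\<not> (\<exists>C. C ** transpose (P - mat 1) = mat 1)"
    by (metis matrix_left_right_inverse matrix_transpose_mul transpose_mat transpose_transpose)
  then obtain x where "x \<noteq> 0" "transpose (P - mat 1) *v x = 0"
    using matrix_left_invertible_ker by blast
  then show ?thesis using that by (simp add: vector_matrix_mult_diff_rdistrib)
qed

text \<open>The entrywise absolute value of a left fixed vector is again fixed, and normalises to a
  distribution.\<close>
lemma stationary_exists:
  assumes "stochastic (P::real^'n^'n)"
  shows "\<exists>\<pi>. stationary P \<pi>"
proof -
  obtain x where x: "x \<noteq> 0" and xP: "x v* P = x"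
    by (rule stochastic_left_fixed_vector[OF assms])
  define w where "w = (\<chi> i. \<bar>x$i\<bar>)"
  have "w$j \<le> (w v* P)$j" for j
  proof -
    have "w$j = \<bar>(x v* P)$j\<bar>" using xP by (simp add: w_def)
    also have "\<dots> \<le> (\<Sum>i\<in>UNIV. \<bar>x$i * P$i$j\<bar>)"
      unfolding vector_matrix_mult_nth by (rule sum_abs)
    also have "\<dots> = (w v* P)$j"
      using assms by (simp add: vector_matrix_mult_nth w_def abs_mult stochastic_nonneg)
    finally show ?thesis .
  qed
  then have wP: "w v* P = w" by (rule stochastic_subinvariant_eq[OF assms])
  obtain i where "x$i \<noteq> 0" using x(1) by (auto simp: vec_eq_iff)
  then have mass: "0 < (\<Sum>i\<in>UNIV. w$i)"
    by (intro sum_pos2[of UNIV i]) (auto simp: w_def)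
  define \<pi> where "\<pi> = (1 / (\<Sum>i\<in>UNIV. w$i)) *s w"
  have "distribution \<pi>"
    using mass by (simp add: distribution_def \<pi>_def w_def sum_divide_distrib[symmetric])
  moreover have "\<pi> v* P = \<pi>" by (simp add: \<pi>_def scalar_vector_matrix_assoc wP)
  ultimately show ?thesis unfolding stationary_def by blast
qed

lemma irreducible_invariant_pos:
  assumes "stochastic P" "irreducible P" "\<And>i. 0 \<le> w$i" "w v* P = w" "0 < w$i"
  shows "0 < w$j"
proof -
  obtain k where k: "0 < matpow P k $i$j" using assms(2) unfolding irreducible_def by blast
  have "w$i * matpow P k $i$j \<le> (w v* matpow P k)$j"
    unfolding vector_matrix_mult_nth
    by (rule member_le_sum) (auto simp: assms(3) stochastic_nonneg[OF stochastic_matpow[OF assms(1)]])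
  also have "\<dots> = w$j" using vector_matrix_mult_matpow_fixed[OF assms(4)] by simp
  finally show ?thesis using mult_pos_pos[OF assms(5) k] by linarith
qed

lemma invariant_positive_part:
  assumes "stochastic P" "u v* P = u"
  shows "(\<chi> i. max (u$i) 0) v* P = (\<chi> i. max (u$i) 0)"
proof (rule stochastic_subinvariant_eq[OF assms(1)])
  fix j
  have "u$j = (\<Sum>i\<in>UNIV. u$i * P$i$j)" using assms(2) by (metis vector_matrix_mult_nth)
  also have "\<dots> \<le> (\<Sum>i\<in>UNIV. max (u$i) 0 * P$i$j)"
    by (rule sum_mono) (simp add: mult_right_mono stochastic_nonneg[OF assms(1)])
  finally have "u$j \<le> ((\<chi> i. max (u$i) 0) v* P)$j" by (simp add: vector_matrix_mult_nth)
  moreover have "0 \<le> ((\<chi> i. max (u$i) 0) v* P)$j"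
    by (simp add: vector_matrix_mult_nth sum_nonneg stochastic_nonneg[OF assms(1)])
  ultimately show "(\<chi> i. max (u$i) 0)$j \<le> ((\<chi> i. max (u$i) 0) v* P)$j" by simp
qed

lemma sum_zero_sign_change:
  fixes u :: "real^'n"
  assumes "(\<Sum>i\<in>UNIV. u$i) = 0" "u \<noteq> 0"
  obtains i j where "0 < u$i" "u$j < 0"
proof -
  obtain k where k: "u$k \<noteq> 0" using assms(2) by (auto simp: vec_eq_iff)
  have "\<exists>i. 0 < u$i"
  proof (rule ccontr)
    assume "\<nexists>i. 0 < u$i"
    then have "\<forall>i\<in>UNIV. - u$i = 0"
      using assms(1) sum_nonneg_eq_0_iff[of UNIV "\<lambda>i. - u$i"] by (simp add: sum_negf not_less)
    then show False using k by simp
  qed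
  moreover have "\<exists>j. u$j < 0"
  proof (rule ccontr)
    assume "\<nexists>j. u$j < 0"
    then have "\<forall>i\<in>UNIV. u$i = 0"
      using assms(1) sum_nonneg_eq_0_iff[of UNIV "\<lambda>i. u$i"] by (simp add: not_less)
    then show False using k by simp
  qed
  ultimately show ?thesis using that by blast
qed

text \<open>Otherwise the positive part of the difference of two stationary distributions would be
  a nonzero invariant vector with a zero entry.\<close>
lemma stationary_unique:
  fixes P :: "real^'n^'n"
  assumes "stochastic P" "irreducible P" "stationary P \<mu>" "stationary P \<nu>"
  shows "\<mu> = \<nu>"
proof (rule ccontr)
  assume "\<mu> \<noteq> \<nu>"
  define u where "u = \<mu> - \<nu>"
  have uP: "u v* P = u"
    using assms(3,4) by (simp add: u_def stationary_def vector_matrix_mult_diff_distrib)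
  have "(\<Sum>i\<in>UNIV. u$i) = 0"
    unfolding u_def by (rule sum_diff_distributions) (use assms(3,4) in \<open>auto simp: stationary_def\<close>)
  moreover have "u \<noteq> 0" using \<open>\<mu> \<noteq> \<nu>\<close> by (simp add: u_def)
  ultimately obtain i j where ij: "0 < u$i" "u$j < 0" by (rule sum_zero_sign_change)
  have "0 < ((\<chi> i. max (u$i) 0)::real^'n)$j"
    by (rule irreducible_invariant_pos[OF assms(1,2) _ invariant_positive_part[OF assms(1) uP], of i])
       (use ij in auto)
  then show False using ij by simp
qed

lemma stationary_stat_dist:
  assumes "stochastic P" "irreducible P"
  shows "stationary P (stat_dist P)"
proof -
  obtain \<pi> where "stationary P \<pi>" using stationary_exists[OF assms(1)] by blast
  then show ?thesis
    unfolding stat_dist_def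
    by (rule theI[of _ \<pi>]) (use stationary_unique[OF assms] \<open>stationary P \<pi>\<close> in blast)
qed

lemma interp_nth: "interp A B s $i$j = (1 - s) * A$i$j + s * B$i$j"
  by (simp add: interp_def)

lemma interp_0: "interp A B 0 = A"
  by (simp add: interp_def)

lemma interp_swap: "interp A B s = interp B A (1 - s)"
  by (simp add: interp_def)

lemma stochastic_interp:
  assumes "stochastic A" "stochastic B" "0 \<le> s" "s \<le> 1"
  shows "stochastic (interp A B s)"
  using assms by (auto simp: stochastic_def interp_nth sum.distrib sum_distrib_left[symmetric])

lemma matpow_interp_ge:
  fixes A B :: "real^'n^'n"
  assumes "\<And>i j. 0 \<le> A$i$j" "\<And>i j. 0 \<le> B$i$j" "0 \<le> s" "s \<le> 1"
  shows "(1 - s)^k * matpow A k $i$j \<le> matpow (interp A B s) k $i$j"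
proof (induct k arbitrary: i j)
  case 0
  then show ?case by (simp add: mat_def)
next
  case (Suc k)
  have entry: "(1 - s) * A$l$j \<le> interp A B s $l$j" for l
    using assms by (simp add: interp_nth)
  have "(1 - s)^Suc k * matpow A (Suc k) $i$j
      = (\<Sum>l\<in>UNIV. ((1 - s)^k * matpow A k $i$l) * ((1 - s) * A$l$j))"
    by (simp add: matrix_matrix_mult_nth sum_distrib_left mult_ac)
  also have "\<dots> \<le> (\<Sum>l\<in>UNIV. matpow (interp A B s) k $i$l * interp A B s $l$j)"
  proof (rule sum_mono, rule mult_mono)
    fix l
    show "0 \<le> matpow (interp A B s) k $i$l"
      by (rule matpow_nonneg) (simp add: interp_nth assms)
    show "0 \<le> (1 - s) * A$l$j" using assms by simp
  qed (use Suc entry in auto)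
  also have "\<dots> = matpow (interp A B s) (Suc k) $i$j"
    by (simp add: matrix_matrix_mult_nth)
  finally show ?case .
qed

lemma irreducible_interp:
  assumes "stochastic A" "stochastic B" "irreducible A" "irreducible B" "0 \<le> s" "s \<le> 1"
  shows "irreducible (interp A B s)"
  unfolding irreducible_def
proof (intro allI)
  fix i j
  show "\<exists>k. 0 < matpow (interp A B s) k $i$j"
  proof (cases "s = 1")
    case True
    then have "interp A B s = B" by (simp add: interp_def)
    then show ?thesis using assms(4) by (simp add: irreducible_def)
  next
    case False
    obtain k where "0 < matpow A k $i$j" using assms(3) irreducible_def by blast
    then have "0 < (1 - s)^k * matpow A k $i$j" using False assms(6) by simp
    also have "\<dots> \<le> matpow (interp A B s) k $i$j"
      by (rule matpow_interp_ge) (use assms in \<open>auto simp: stochastic_nonneg\<close>)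
    finally show ?thesis by blast
  qed
qed

subsection \<open>Primitivity of irreducible aperiodic chains\<close>

lemma add_monoid_mult_mem:
  fixes S :: "nat set"
  assumes "0 \<in> S" "\<And>a b. a \<in> S \<Longrightarrow> b \<in> S \<Longrightarrow> a + b \<in> S" "x \<in> S"
  shows "k * x \<in> S"
  by (induct k) (simp_all add: assms)

lemma add_monoid_consecutive_large:
  fixes S :: "nat set"
  assumes "0 \<in> S" and add: "\<And>a b. a \<in> S \<Longrightarrow> b \<in> S \<Longrightarrow> a + b \<in> S"
    and "b \<in> S" "Suc b \<in> S" "b * b \<le> n"
  shows "n \<in> S"
proof (cases "b = 0")
  case True
  then show ?thesis using add_monoid_mult_mem[of S "Suc b" n] assms by simp
next
  case False
  define q r where "q = n div b" and "r = n mod b"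
  have "n = q * b + r" by (simp add: q_def r_def)
  moreover have "r < b" using False by (simp add: r_def)
  moreover have "b \<le> q"
    using div_le_mono[OF assms(5), of b] False by (simp add: q_def)
  ultimately have "n = (q - r) * b + r * Suc b"
    by (simp add: algebra_simps diff_mult_distrib)
  moreover have "(q - r) * b \<in> S" by (rule add_monoid_mult_mem[OF assms(1) add assms(3)])
  moreover have "r * Suc b \<in> S" by (rule add_monoid_mult_mem[OF assms(1) add assms(4)])
  ultimately show ?thesis using add by simp
qed

text \<open>The least positive gap d between elements of S divides every element of S
  (reduce modulo d), hence divides Gcd S.\<close>
lemma add_monoid_Gcd_1_consecutive:
  fixes S :: "nat set"
  assumes "0 \<in> S" and add: "\<And>a b. a \<in> S \<Longrightarrow> b \<in> S \<Longrightarrow> a + b \<in> S" and "Gcd S = 1"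
  obtains b where "b \<in> S" "Suc b \<in> S"
proof -
  define D where "D = {d. 0 < d \<and> (\<exists>b\<in>S. b + d \<in> S)}"
  have "\<not> S \<subseteq> {0}" using assms(3) Gcd_0_iff[of S] by auto
  then obtain s where "s \<in> S" "0 < s" by auto
  then have "s \<in> D" using assms(1) by (auto simp: D_def intro: bexI[of _ 0])
  define d where "d = (LEAST d. d \<in> D)"
  have "d \<in> D" unfolding d_def by (rule LeastI) fact
  then obtain b where b: "b \<in> S" "b + d \<in> S" "0 < d" by (auto simp: D_def)
  have "d dvd x" if "x \<in> S" for x
  proof -
    define q r where "q = x div d" and "r = x mod d"
    have "x + q * b = q * (b + d) + r" by (simp add: q_def r_def algebra_simps)
    moreover have "x + q * b \<in> S"
      using add[OF that add_monoid_mult_mem[OF assms(1) add b(1)]] .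
    moreover have "q * (b + d) \<in> S" by (rule add_monoid_mult_mem[OF assms(1) add b(2)])
    ultimately have "0 < r \<Longrightarrow> r \<in> D" unfolding D_def by auto
    then have "0 < r \<Longrightarrow> d \<le> r" unfolding d_def by (simp add: Least_le)
    moreover have "r < d" using b(3) by (simp add: r_def)
    ultimately have "r = 0" by linarith
    then show ?thesis by (simp add: r_def dvd_eq_mod_eq_0)
  qed
  then have "d = 1" using assms(3) by (metis Gcd_greatest nat_dvd_1_iff_1)
  then show ?thesis using b that by simp
qed

lemma add_closed_Gcd_1_eventually_mem:
  fixes S :: "nat set"
  assumes add: "\<And>a b. a \<in> S \<Longrightarrow> b \<in> S \<Longrightarrow> a + b \<in> S" and "Gcd S = 1"
  shows "\<exists>N. \<forall>n\<ge>N. n \<in> S"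
proof -
  have add0: "a + b \<in> insert 0 S" if "a \<in> insert 0 S" "b \<in> insert 0 S" for a b
    using that add by auto
  have "Gcd (insert 0 S) = 1" using assms(2) by simp
  then obtain b where "b \<in> insert 0 S" "Suc b \<in> insert 0 S"
    using add_monoid_Gcd_1_consecutive[of "insert 0 S"] add0 by blast
  then have "n \<in> S" if "Suc (b * b) \<le> n" for n
    using add_monoid_consecutive_large[of "insert 0 S" b n] add0 that by auto
  then show ?thesis by (intro exI[of _ "Suc (b * b)"]) simp
qed

lemma irreducible_aperiodic_matpow_pos:
  fixes P :: "real^'n^'n"
  assumes "stochastic P" "irreducible P" "aperiodic P"
  shows "\<exists>K. \<forall>i j. 0 < matpow P K $i$j"
proof -
  have nonneg: "0 \<le> matpow P k $i$j" for k i j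
    by (rule stochastic_nonneg[OF stochastic_matpow[OF assms(1)]])
  have chain: "matpow P a $i$l * matpow P b $l$j \<le> matpow P (a + b) $i$j" for a b i j l
    unfolding matpow_add matrix_matrix_mult_nth by (rule member_le_sum) (auto simp: nonneg)
  have diagonal: "\<exists>N. \<forall>t\<ge>N. 0 < matpow P t $i$i" for i
  proof -
    define S where "S = {t. 1 \<le> t \<and> 0 < matpow P t $i$i}"
    have "Gcd S = 1" using assms(3) by (simp add: aperiodic_def period_def S_def)
    moreover have "a + b \<in> S" if "a \<in> S" "b \<in> S" for a b
      using that chain[of a i i b i] by (simp add: S_def) (metis mult_pos_pos order_less_le_trans)
    ultimately show ?thesis using add_closed_Gcd_1_eventually_mem[of S] by (auto simp: S_def)
  qed
  have "\<exists>N. \<forall>t\<ge>N. 0 < matpow P t $i$j" for i j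
  proof -
    obtain k where k: "0 < matpow P k $i$j" using assms(2) irreducible_def by blast
    obtain N where N: "\<forall>t\<ge>N. 0 < matpow P t $i$i" using diagonal by blast
    have "0 < matpow P t $i$j" if "N + k \<le> t" for t
    proof -
      have "0 < matpow P (t - k) $i$i * matpow P k $i$j" using N k that by simp
      then show ?thesis using chain[of "t - k" i i k j] that by simp
    qed
    then show ?thesis by blast
  qed
  then obtain N where N: "\<And>i j t. N i j \<le> t \<Longrightarrow> 0 < matpow P t $i$j" by metis
  have "N i j \<le> Max (range (case_prod N))" for i j
    by (rule Max_ge) (auto intro: image_eqI[of _ _ "(i, j)"])
  then show ?thesis using N by blast
qed

lemma irreducible_aperiodic_matpow_ge:
  fixes P :: "real^'n^'n"
  assumes "stochastic P" "irreducible P" "aperiodic P"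
  obtains K c where "0 < c" "\<And>i j. c \<le> matpow P K $i$j"
proof -
  obtain K where K: "\<forall>i j. 0 < matpow P K $i$j"
    using irreducible_aperiodic_matpow_pos[OF assms] by blast
  define c where "c = Min (range (\<lambda>(i, j). matpow P K $i$j))"
  have "c \<in> range (\<lambda>(i, j). matpow P K $i$j)" unfolding c_def by (rule Min_in) auto
  then have "0 < c" using K by auto
  moreover have "c \<le> matpow P K $i$j" for i j
    unfolding c_def by (rule Min_le) (auto intro: image_eqI[of _ _ "(i, j)"])
  ultimately show ?thesis using that by blast
qed

subsection \<open>Mixing times\<close>

definition mixed_after :: "real^'n^'n \<Rightarrow> real \<Rightarrow> nat \<Rightarrow> bool" where
  "mixed_after P \<epsilon> T \<longleftrightarrow>
     (\<forall>\<nu>. distribution \<nu> \<longrightarrow> tv_dist (\<nu> v* matpow P T) (stat_dist P) \<le> \<epsilon>)"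

lemma tmix_eq_Inf_mixed_after: "tmix P \<epsilon> = Inf {T. mixed_after P \<epsilon> T}"
  by (simp add: tmix_def mixed_after_def)

lemma tmix_le: "mixed_after P \<epsilon> T \<Longrightarrow> tmix P \<epsilon> \<le> T"
  unfolding tmix_eq_Inf_mixed_after by (rule cInf_lower) auto

lemma mixed_after_tmix:
  assumes "mixed_after P \<epsilon> T"
  shows "mixed_after P \<epsilon> (tmix P \<epsilon>)"
proof -
  have "Inf {T. mixed_after P \<epsilon> T} \<in> {T. mixed_after P \<epsilon> T}"
    by (rule Inf_nat_def1) (use assms in blast)
  then show ?thesis by (simp add: tmix_eq_Inf_mixed_after)
qed

lemma l1_norm_vector_matrix_matpow_doeblin:
  assumes "stochastic Q" "\<And>i j. c \<le> Q$i$j" "(\<Sum>i\<in>UNIV. u$i) = 0"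
  shows "l1_norm (u v* matpow Q m) \<le> (1 - real CARD('n) * c)^m * l1_norm (u::real^'n)"
proof (induct m)
  case (Suc m)
  have "(\<Sum>i\<in>UNIV. (u v* matpow Q m)$i) = 0"
    using sum_vector_matrix_mult_stochastic[OF stochastic_matpow[OF assms(1)]] assms(3) by simp
  then have "l1_norm ((u v* matpow Q m) v* Q) \<le> (1 - real CARD('n) * c) * l1_norm (u v* matpow Q m)"
    by (rule l1_norm_vector_matrix_mult_doeblin[OF assms(1,2)])
  also have "\<dots> \<le> (1 - real CARD('n) * c) * ((1 - real CARD('n) * c)^m * l1_norm u)"
    using Suc stochastic_entry_lower_bound[OF assms(1,2)] by (intro mult_left_mono) simp_all
  finally show ?case by (simp only: matpow.simps vector_matrix_mul_assoc[symmetric] power_Suc mult.assoc)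
qed simp

lemma mixed_after_doeblin:
  fixes P :: "real^'n^'n"
  assumes "stochastic P" "irreducible P" "\<And>i j. c \<le> matpow P K $i$j"
    and "(1 - real CARD('n) * c)^m \<le> \<epsilon>"
  shows "mixed_after P \<epsilon> (m * K)"
  unfolding mixed_after_def
proof (intro allI impI)
  fix \<nu> :: "real^'n" assume \<nu>: "distribution \<nu>"
  define Q where "Q = matpow P K"
  define \<pi> where "\<pi> = stat_dist P"
  have Q: "stochastic Q" unfolding Q_def by (rule stochastic_matpow[OF assms(1)])
  have c: "real CARD('n) * c \<le> 1"
    by (rule stochastic_entry_lower_bound[OF Q]) (simp add: Q_def assms(3))
  have \<pi>: "stationary P \<pi>" unfolding \<pi>_def by (rule stationary_stat_dist[OF assms(1,2)])
  have mass: "(\<Sum>i\<in>UNIV. (\<nu> - \<pi>)$i) = 0"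
    using \<pi> \<nu> by (intro sum_diff_distributions) (simp_all add: stationary_def)
  have "\<pi> v* matpow Q m = \<pi>"
    using \<pi> unfolding Q_def by (intro vector_matrix_mult_matpow_fixed) (simp add: stationary_def)
  then have "\<nu> v* matpow P (m * K) - \<pi> = (\<nu> - \<pi>) v* matpow Q m"
    by (simp add: Q_def matpow_mult vector_matrix_mult_diff_distrib)
  moreover have "l1_norm ((\<nu> - \<pi>) v* matpow Q m) \<le> (1 - real CARD('n) * c)^m * l1_norm (\<nu> - \<pi>)"
    by (rule l1_norm_vector_matrix_matpow_doeblin[OF Q _ mass]) (simp add: Q_def assms(3))
  moreover have "(1 - real CARD('n) * c)^m * l1_norm (\<nu> - \<pi>) \<le> (1 - real CARD('n) * c)^m * 2"
    using \<pi> \<nu> c by (intro mult_left_mono l1_norm_diff_distributions_le) (simp_all add: stationary_def)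
  ultimately show "tv_dist (\<nu> v* matpow P (m * K)) (stat_dist P) \<le> \<epsilon>"
    using assms(4) by (simp add: tv_dist_eq_l1_norm \<pi>_def)
qed

lemma mixed_after_tmix_aperiodic:
  fixes P :: "real^'n^'n"
  assumes "stochastic P" "irreducible P" "aperiodic P" "0 < \<epsilon>"
  shows "mixed_after P \<epsilon> (tmix P \<epsilon>)"
proof -
  obtain c K where Kc: "0 < c" "\<And>i j. c \<le> matpow P K $i$j"
    using irreducible_aperiodic_matpow_ge[OF assms(1-3)] by metis
  have "1 - real CARD('n) * c < 1" using Kc(1) by simp
  then obtain m where m: "(1 - real CARD('n) * c)^m < \<epsilon>"
    using real_arch_pow_inv[OF assms(4)] by blast
  have "mixed_after P \<epsilon> (m * K)"
    by (rule mixed_after_doeblin[OF assms(1,2) Kc(2)]) (use m in linarith)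
  then show ?thesis by (rule mixed_after_tmix)
qed

lemma tmix_interp_bounded_near_0:
  fixes A B :: "real^'n^'n"
  assumes "stochastic A" "irreducible A" "aperiodic A" "stochastic B" "irreducible B" "0 < \<epsilon>"
  obtains N where "\<And>s. 0 \<le> s \<Longrightarrow> s \<le> 1/2 \<Longrightarrow> tmix (interp A B s) \<epsilon> \<le> N"
proof -
  obtain c K where Kc: "0 < c" "\<And>i j. c \<le> matpow A K $i$j"
    using irreducible_aperiodic_matpow_ge[OF assms(1-3)] by metis
  define d where "d = (1/2)^K * c"
  have "1 - real CARD('n) * d < 1" using Kc(1) by (simp add: d_def)
  then obtain m where m: "(1 - real CARD('n) * d)^m < \<epsilon>"
    using real_arch_pow_inv[OF assms(6)] by blast
  have "tmix (interp A B s) \<epsilon> \<le> m * K" if s: "0 \<le> s" "s \<le> 1/2" for s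
  proof (rule tmix_le, rule mixed_after_doeblin)
    show "stochastic (interp A B s)" "irreducible (interp A B s)"
      using s assms by (auto intro: stochastic_interp irreducible_interp)
    show "(1 - real CARD('n) * d)^m \<le> \<epsilon>" using m by linarith
    fix i j
    have "d \<le> (1 - s)^K * matpow A K $i$j"
      unfolding d_def using s Kc by (intro mult_mono power_mono) auto
    also have "\<dots> \<le> matpow (interp A B s) K $i$j"
      using s assms by (intro matpow_interp_ge) (auto simp: stochastic_nonneg)
    finally show "d \<le> matpow (interp A B s) K $i$j" .
  qed
  then show ?thesis using that by blast
qed

lemma tmix_interp_bounded:
  fixes P0 P1 :: "real^'n^'n"
  assumes "stochastic P0" "irreducible P0" "aperiodic P0"
    and "stochastic P1" "irreducible P1" "aperiodic P1" and "0 < \<epsilon>"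
  shows "bdd_above ((\<lambda>s. tmix (interp P0 P1 s) \<epsilon>) ` {0..1})"
proof -
  obtain N0 where N0: "\<And>s. 0 \<le> s \<Longrightarrow> s \<le> 1/2 \<Longrightarrow> tmix (interp P0 P1 s) \<epsilon> \<le> N0"
    using tmix_interp_bounded_near_0[OF assms(1-5,7)] by metis
  obtain N1 where N1: "\<And>s. 0 \<le> s \<Longrightarrow> s \<le> 1/2 \<Longrightarrow> tmix (interp P1 P0 s) \<epsilon> \<le> N1"
    using tmix_interp_bounded_near_0[OF assms(4-6,1,2,7)] by metis
  have "tmix (interp P0 P1 s) \<epsilon> \<le> max N0 N1" if "s \<in> {0..1}" for s
    using that N0[of s] N1[of "1 - s"] interp_swap[of P0 P1 s] by (cases "s \<le> 1/2") auto
  then show ?thesis by (intro bdd_aboveI[of _ "max N0 N1"]) auto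
qed

subsection \<open>Perturbation of the stationary distribution\<close>

text \<open>Split u into its positive and negative parts, which have equal mass c.\<close>
lemma zero_mass_eq_scaled_distribution_diff:
  fixes u :: "real^'n"
  assumes "(\<Sum>i\<in>UNIV. u$i) = 0"
  obtains c a b where "0 \<le> c" "distribution a" "distribution b" "u = c *\<^sub>R (a - b)"
    "l1_norm u = 2 * c"
proof -
  define p :: "real^'n" where "p = (\<chi> i. max (u$i) 0)"
  define q :: "real^'n" where "q = (\<chi> i. max (- u$i) 0)"
  define c where "c = (\<Sum>i\<in>UNIV. p$i)"
  have u: "u = p - q" by (simp add: vec_eq_iff p_def q_def max_def)
  have nonneg: "0 \<le> p$i" "0 \<le> q$i" for i by (auto simp: p_def q_def)
  have mass_q: "(\<Sum>i\<in>UNIV. q$i) = c" using assms unfolding u c_def by (simp add: sum_subtractf)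
  have "l1_norm u = (\<Sum>i\<in>UNIV. p$i + q$i)"
    unfolding l1_norm_def by (rule sum.cong) (auto simp: p_def q_def)
  then have l1_u: "l1_norm u = 2 * c" using mass_q by (simp add: sum.distrib c_def)
  show ?thesis
  proof (cases "c = 0")
    case True
    define w :: "real^'n" where "w = (\<chi> i. 1 / real CARD('n))"
    have "p = 0" "q = 0"
      using True mass_q sum_nonneg_eq_0_iff[of UNIV "\<lambda>i. p$i"] sum_nonneg_eq_0_iff[of UNIV "\<lambda>i. q$i"]
      by (auto simp: nonneg c_def vec_eq_iff)
    moreover have "distribution w" by (simp add: distribution_def w_def)
    ultimately show ?thesis using that[of 0 w w] l1_u True u by simp
  next
    case False
    then have "0 < c" using nonneg unfolding c_def by (simp add: sum_nonneg order_le_neq_trans)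
    have "distribution ((1 / c) *\<^sub>R p)" "distribution ((1 / c) *\<^sub>R q)"
      using \<open>0 < c\<close> nonneg mass_q by (simp_all add: distribution_def c_def sum_divide_distrib[symmetric])
    moreover have "u = c *\<^sub>R ((1 / c) *\<^sub>R p - (1 / c) *\<^sub>R q)"
      using \<open>0 < c\<close> u by (simp add: scaleR_diff_right)
    ultimately show ?thesis
      using that[of c "(1 / c) *\<^sub>R p" "(1 / c) *\<^sub>R q"] \<open>0 < c\<close> l1_u by simp
  qed
qed

text \<open>Write \<mu> - \<nu> = c (a - b) with distributions a, b; then a M and b M both lie within \<eta>
  of \<pi>.\<close>
lemma l1_norm_vector_matrix_mult_contract:
  fixes M :: "real^'n^'n"
  assumes mix: "\<And>\<nu>. distribution \<nu> \<Longrightarrow> l1_norm (\<nu> v* M - \<pi>) \<le> \<eta>"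
    and "distribution \<mu>" "distribution \<nu>"
  shows "l1_norm ((\<mu> - \<nu>) v* M) \<le> \<eta> * l1_norm (\<mu> - \<nu>)"
proof -
  obtain c a b where c: "0 \<le> c" "distribution a" "distribution b" "\<mu> - \<nu> = c *\<^sub>R (a - b)"
    "l1_norm (\<mu> - \<nu>) = 2 * c"
    using zero_mass_eq_scaled_distribution_diff[OF sum_diff_distributions[OF assms(2,3)]] by metis
  have "(\<mu> - \<nu>) v* M = c *\<^sub>R ((a v* M - \<pi>) - (b v* M - \<pi>))"
    unfolding c(4) by (simp add: vector_matrix_mult_diff_distrib vector_matrix_mult_scaleR_left)
  then have "l1_norm ((\<mu> - \<nu>) v* M) = c * l1_norm ((a v* M - \<pi>) - (b v* M - \<pi>))"
    using c(1) by (simp add: l1_norm_scaleR)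
  also have "\<dots> \<le> c * (\<eta> + \<eta>)"
    using l1_norm_diff_le[of "a v* M - \<pi>" "b v* M - \<pi>"] mix[OF c(2)] mix[OF c(3)] c(1)
    by (intro mult_left_mono) auto
  finally show ?thesis using c(5) by (simp add: algebra_simps)
qed

lemma stationary_interp_matpow:
  assumes "stationary (interp P0 P1 s) \<pi>"
  shows "\<pi> v* matpow P0 k = \<pi> - s *\<^sub>R (\<Sum>j<k. (\<pi> v* P1 - \<pi> v* P0) v* matpow P0 j)"
proof -
  define d where "d = \<pi> v* P1 - \<pi> v* P0"
  have "\<pi> v* interp P0 P1 s = \<pi> v* P0 + s *\<^sub>R d"
    by (simp add: vec_eq_iff vector_matrix_mult_nth interp_nth d_def algebra_simps sum.distrib
        sum_distrib_left sum_subtractf)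
  then have step: "\<pi> v* P0 = \<pi> - s *\<^sub>R d" using assms by (simp add: stationary_def algebra_simps)
  have "\<pi> v* matpow P0 k = \<pi> - s *\<^sub>R (\<Sum>j<k. d v* matpow P0 j)"
  proof (induct k)
    case (Suc k)
    have "\<pi> v* matpow P0 (Suc k) = (\<pi> v* matpow P0 k) v* P0"
      by (simp add: vector_matrix_mul_assoc)
    also have "\<dots> = \<pi> v* P0 - s *\<^sub>R (\<Sum>j<k. d v* matpow P0 (Suc j))"
      unfolding Suc
      by (simp add: vector_matrix_mult_diff_distrib vector_matrix_mult_scaleR_left
          vector_matrix_mult_sum_left vector_matrix_mul_assoc)
    also have "\<dots> = \<pi> - s *\<^sub>R (\<Sum>j<Suc k. d v* matpow P0 j)"
      unfolding step sum.lessThan_Suc_shift by (simp add: algebra_simps)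
    finally show ?case .
  qed simp
  then show ?thesis by (simp add: d_def)
qed

lemma l1_norm_sum_vector_matrix_mult_matpow_le:
  assumes "stochastic P"
  shows "l1_norm (\<Sum>j<T. d v* matpow P j) \<le> real T * l1_norm d"
proof -
  have "(\<Sum>j<T. l1_norm (d v* matpow P j)) \<le> (\<Sum>j<T. l1_norm d)"
    by (rule sum_mono) (rule l1_norm_vector_matrix_mult_le[OF stochastic_matpow[OF assms]])
  then show ?thesis using l1_norm_sum_le[of "\<lambda>j. d v* matpow P j" "{..<T}"] by simp
qed

lemma tv_stationary_interp_le:
  fixes P0 P1 :: "real^'n^'n"
  assumes "stochastic P0" "stochastic P1" "stationary P0 (stat_dist P0)"
    and "stationary (interp P0 P1 s) \<pi>" "0 \<le> s" "\<eta> < 1" "mixed_after P0 (\<eta>/2) T"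
  shows "tv_dist \<pi> (stat_dist P0) \<le> s * real T / (1 - \<eta>)"
proof -
  define \<pi>0 where "\<pi>0 = stat_dist P0"
  define d where "d = \<pi> v* P1 - \<pi> v* P0"
  have dist: "distribution \<pi>" "distribution \<pi>0"
    using assms(3,4) by (auto simp: stationary_def \<pi>0_def)
  have "\<pi>0 v* matpow P0 T = \<pi>0"
    using assms(3) by (simp add: stationary_def vector_matrix_mult_matpow_fixed \<pi>0_def)
  then have split: "\<pi> - \<pi>0 = (\<pi> - \<pi>0) v* matpow P0 T + s *\<^sub>R (\<Sum>j<T. d v* matpow P0 j)"
    using stationary_interp_matpow[OF assms(4), of T]
    by (simp add: vector_matrix_mult_diff_distrib d_def)
  have contract: "l1_norm ((\<pi> - \<pi>0) v* matpow P0 T) \<le> \<eta> * l1_norm (\<pi> - \<pi>0)"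
    using assms(7) dist
    by (intro l1_norm_vector_matrix_mult_contract) (auto simp: mixed_after_def tv_dist_eq_l1_norm \<pi>0_def)
  have "l1_norm d \<le> 2" unfolding d_def
    using dist(1) assms(1,2) by (intro l1_norm_diff_distributions_le distribution_vector_matrix_mult)
  then have defect: "l1_norm (\<Sum>j<T. d v* matpow P0 j) \<le> 2 * real T"
    using l1_norm_sum_vector_matrix_mult_matpow_le[OF assms(1), of d T]
      mult_left_mono[of "l1_norm d" 2 "real T"] by linarith
  have "l1_norm (\<pi> - \<pi>0) \<le> l1_norm ((\<pi> - \<pi>0) v* matpow P0 T) + l1_norm (s *\<^sub>R (\<Sum>j<T. d v* matpow P0 j))"
    using l1_norm_triangle split by metis
  also have "\<dots> \<le> \<eta> * l1_norm (\<pi> - \<pi>0) + s * (2 * real T)"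
    using contract defect assms(5) by (simp add: l1_norm_scaleR mult_left_mono add_mono)
  finally have "(1 - \<eta>) * l1_norm (\<pi> - \<pi>0) \<le> 2 * (s * real T)" by (simp add: algebra_simps)
  then have "l1_norm (\<pi> - \<pi>0) \<le> 2 * (s * real T) / (1 - \<eta>)"
    using assms(6) by (simp add: pos_le_divide_eq mult.commute)
  then show ?thesis by (simp add: tv_dist_eq_l1_norm \<pi>0_def mult_ac)
qed

lemma tv_stat_dist_interp_le:
  fixes P0 P1 :: "real^'n^'n"
  assumes "stochastic P0" "irreducible P0" "aperiodic P0" "stochastic P1" "irreducible P1"
    and "0 < \<eta>" "\<eta> < 1" "s \<in> {0..1}"
  shows "tv_dist (stat_dist (interp P0 P1 s)) (stat_dist P0) \<le> s * real (tmix P0 (\<eta>/2)) / (1 - \<eta>)"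
proof (rule tv_stationary_interp_le[OF assms(1,4)])
  show "stationary P0 (stat_dist P0)" by (rule stationary_stat_dist[OF assms(1,2)])
  show "stationary (interp P0 P1 s) (stat_dist (interp P0 P1 s))"
    using assms by (intro stationary_stat_dist stochastic_interp irreducible_interp) auto
  show "mixed_after P0 (\<eta>/2) (tmix P0 (\<eta>/2))"
    using assms(6) by (intro mixed_after_tmix_aperiodic[OF assms(1-3)]) simp
qed (use assms in auto)

lemma stat_dist_interp_tendsto:
  fixes P0 P1 :: "real^'n^'n"
  assumes "stochastic P0" "irreducible P0" "aperiodic P0" "stochastic P1" "irreducible P1"
  shows "((\<lambda>s. tv_dist (stat_dist (interp P0 P1 s)) (stat_dist P0)) \<longlongrightarrow> 0) (at 0 within {0..1})"
proof (rule tendsto_sandwich)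
  define C where "C = 2 * real (tmix P0 (1/4))"
  show "\<forall>\<^sub>F s in at 0 within {0..1}. tv_dist (stat_dist (interp P0 P1 s)) (stat_dist P0) \<le> s * C"
    unfolding eventually_at_filter
    by (intro always_eventually allI impI)
       (use tv_stat_dist_interp_le[OF assms, of "1/2"] in \<open>auto simp: C_def mult_ac\<close>)
  show "\<forall>\<^sub>F s in at 0 within {0..1}. 0 \<le> tv_dist (stat_dist (interp P0 P1 s)) (stat_dist P0)"
    by (simp add: tv_dist_eq_l1_norm l1_norm_nonneg)
  have "((\<lambda>s. s * C) \<longlongrightarrow> 0 * C) (at 0 within {0..1})" by (intro tendsto_intros)
  then show "((\<lambda>s. s * C) \<longlongrightarrow> 0) (at 0 within {0..1})" by simp
qed simp

lemma tmix_le_tmix_path: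
  fixes P0 P1 :: "real^'n^'n"
  assumes "stochastic P0" "irreducible P0" "aperiodic P0"
    and "stochastic P1" "irreducible P1" "aperiodic P1" and "0 < \<epsilon>"
  shows "tmix P0 \<epsilon> \<le> tmix_path P0 P1 \<epsilon>"
proof -
  have "tmix (interp P0 P1 0) \<epsilon> \<le> tmix_path P0 P1 \<epsilon>"
    unfolding tmix_path_def by (rule cSup_upper[OF _ tmix_interp_bounded[OF assms]]) simp
  then show ?thesis by (simp add: interp_0)
qed

text \<open>The factors n powr (3/2) \<ge> 1 and 1 - sqrt n \<epsilon> \<le> 1 - \<epsilon> only shrink the radius; even \<epsilon>/4
  is reached. If T' = 0 (division by zero) the radius is 0, and so is T.\<close>
lemma radius_times_mixing_time_le:
  fixes n \<epsilon> s T T' :: real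
  assumes "1 \<le> n" "0 < \<epsilon>" "sqrt n * \<epsilon> < 1" "0 \<le> T" "T \<le> T'" "0 \<le> s"
    and "s \<le> \<epsilon> * (1 - sqrt n * \<epsilon>) / (4 * n powr (3/2) * T')"
  shows "s * T / (1 - \<epsilon>) \<le> \<epsilon> / 4"
proof -
  have "\<epsilon> \<le> sqrt n * \<epsilon>" using assms(1,2) by simp
  then have "\<epsilon> < 1" using assms(3) by linarith
  have "1 \<le> n powr (3/2)" using assms(1) by (rule ge_one_powr_ge_zero) simp
  have "s * T \<le> \<epsilon> * (1 - sqrt n * \<epsilon>) / (4 * n powr (3/2) * T') * T'"
    using assms(4-7) by (intro mult_mono) auto
  also have "\<dots> \<le> \<epsilon> * (1 - \<epsilon>) / 4"
  proof (cases "T' = 0")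
    case False
    then have "\<epsilon> * (1 - sqrt n * \<epsilon>) / (4 * n powr (3/2) * T') * T'
        = \<epsilon> * (1 - sqrt n * \<epsilon>) / (4 * n powr (3/2))" by simp
    also have "\<dots> \<le> \<epsilon> * (1 - \<epsilon>) / 4"
      using assms(2,3) \<open>\<epsilon> \<le> sqrt n * \<epsilon>\<close> \<open>1 \<le> n powr (3/2)\<close> \<open>\<epsilon> < 1\<close>
      by (intro frac_le mult_left_mono) auto
    finally show ?thesis .
  qed (use assms(2) \<open>\<epsilon> < 1\<close> in simp)
  finally show ?thesis using \<open>\<epsilon> < 1\<close> by (simp add: field_simps)
qed

lemma tv_stat_dist_interp_le_radius:
  fixes P0 P1 :: "real^'n^'n"
  assumes "stochastic P0" "irreducible P0" "aperiodic P0"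
    and "stochastic P1" "irreducible P1" "aperiodic P1"
    and "0 < \<epsilon>" "\<epsilon> < 1 / sqrt (real CARD('n))" "s \<in> {0..1}"
    and "s \<le> \<epsilon> * (1 - sqrt (real CARD('n)) * \<epsilon>)
              / (4 * real CARD('n) powr (3/2) * real (tmix_path P0 P1 (\<epsilon>/2)))"
  shows "tv_dist (stat_dist (interp P0 P1 s)) (stat_dist P0) \<le> \<epsilon> / 2"
proof -
  have "sqrt (real CARD('n)) * \<epsilon> < 1" using assms(8) by (simp add: field_simps)
  moreover have "\<epsilon> \<le> sqrt (real CARD('n)) * \<epsilon>" using assms(7) by simp
  ultimately have "\<epsilon> < 1" by linarith
  have "tv_dist (stat_dist (interp P0 P1 s)) (stat_dist P0) \<le> s * real (tmix P0 (\<epsilon>/2)) / (1 - \<epsilon>)"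
    using assms \<open>\<epsilon> < 1\<close> by (intro tv_stat_dist_interp_le) auto
  also have "\<dots> \<le> \<epsilon> / 4"
    using assms \<open>sqrt (real CARD('n)) * \<epsilon> < 1\<close> tmix_le_tmix_path[OF assms(1-6), of "\<epsilon>/2"]
    by (intro radius_times_mixing_time_le) auto
  finally show ?thesis using assms(7) by simp
qed

theorem corollary1:
  fixes P0 P1 :: "real^'n^'n"
  assumes "stochastic P0" "irreducible P0" "aperiodic P0"
      and "stochastic P1" "irreducible P1" "aperiodic P1"
  shows "((\<lambda>s. tv_dist (stat_dist (interp P0 P1 s)) (stat_dist P0)) \<longlongrightarrow> 0) (at 0 within {0..1})
    \<and> (\<forall>\<epsilon>. 0 < \<epsilon> \<and> \<epsilon> < 1 / sqrt (real CARD('n)) \<longrightarrow>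
         (let \<delta> = \<epsilon> * (1 - sqrt (real CARD('n)) * \<epsilon>)
                  / (4 * real CARD('n) powr (3/2) * real (tmix_path P0 P1 (\<epsilon>/2)))
          in \<forall>s\<in>{0..1}. s \<le> \<delta> \<longrightarrow>
               tv_dist (stat_dist (interp P0 P1 s)) (stat_dist P0) \<le> \<epsilon> / 2))"
  using stat_dist_interp_tendsto[OF assms(1-5)] tv_stat_dist_interp_le_radius[OF assms]
  by (simp add: Let_def)

end
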